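(* For $0\le i\le n$, $dp(0,i)=(0,\pi_0)$ is the smallest pair in $DP_i$, and it is the only pair in $DP_i$ whose second component equals $\pi_0$.
   Context: Let $x_0\le x_1\le\cdots\le x_{n+1}$ be real numbers, $\{x\}=x-\lfloor x\rfloor$, and let $\pi=(\pi_0,\dots,\pi_{n+1})$ be the permutation of $\{0,\dots,n+1\}$ such that for $0\le i<j\le n+1$, $\pi_i>\pi_j$ iff $(\{x_i\},-x_i,i)<(\{x_j\},-x_j,j)$ lexicographically. For a sequence of indices $s_0<\cdots<s_k$, a drop is a consecutive pair $(s_{h-1},s_h)$ with $\pi_{s_{h-1}}>\pi_{s_h}$. For $0\le h\le i\le n$, $dp(h,i)$ is the pair $(d(h,i),p(h,i))$, where $d(h,i)$ is the minimum number of drops over all sequences of $h+1$ indices $0=s_0<s_1<\cdots<s_h\le i$, and $p(h,i)$ is the minimum of $\pi_{s_h}$ over all such sequences having exactly $d(h,i)$ drops. Let $DP_i=\{dp(h,i)\mid 0\le h\le i\}$. Pairs are compared lexicographically. *)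

theory Defs
  imports Complex_Main
begin

text \<open>Fractional part {x} = x - floor x (library: frac). Key of index i is
  the triple ({x_i}, -x_i, i), compared lexicographically.\<close>

definition key_less :: "(nat \<Rightarrow> real) \<Rightarrow> nat \<Rightarrow> nat \<Rightarrow> bool" where
  "key_less x i j \<longleftrightarrow>
     frac (x i) < frac (x j) \<or>
     (frac (x i) = frac (x j) \<and> (- x i < - x j \<or> (- x i = - x j \<and> i < j)))"

text \<open>Sequences of h+1 indices 0 = s_0 < s_1 < ... < s_h \<le> i, represented by
  functions nat \<Rightarrow> nat restricted to {0..h}.\<close>

definition valid_seq :: "nat \<Rightarrow> nat \<Rightarrow> (nat \<Rightarrow> nat) \<Rightarrow> bool" where
  "valid_seq h i s \<longleftrightarrow> s 0 = 0 \<and> (\<forall>k. 1 \<le> k \<and> k \<le> h \<longrightarrow> s (k - 1) < s k) \<and> s h \<le> i"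

definition drops :: "(nat \<Rightarrow> nat) \<Rightarrow> nat \<Rightarrow> (nat \<Rightarrow> nat) \<Rightarrow> nat" where
  "drops \<pi> h s = card {k \<in> {1..h}. \<pi> (s (k - 1)) > \<pi> (s k)}"

definition dd :: "(nat \<Rightarrow> nat) \<Rightarrow> nat \<Rightarrow> nat \<Rightarrow> nat" where
  "dd \<pi> h i = (LEAST m. \<exists>s. valid_seq h i s \<and> drops \<pi> h s = m)"

definition pp :: "(nat \<Rightarrow> nat) \<Rightarrow> nat \<Rightarrow> nat \<Rightarrow> nat" where
  "pp \<pi> h i = (LEAST v. \<exists>s. valid_seq h i s \<and> drops \<pi> h s = dd \<pi> h i \<and> \<pi> (s h) = v)"

definition dp :: "(nat \<Rightarrow> nat) \<Rightarrow> nat \<Rightarrow> nat \<Rightarrow> nat \<times> nat" where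
  "dp \<pi> h i = (dd \<pi> h i, pp \<pi> h i)"

definition DP :: "(nat \<Rightarrow> nat) \<Rightarrow> nat \<Rightarrow> (nat \<times> nat) set" where
  "DP \<pi> i = {dp \<pi> h i | h. h \<le> i}"

definition lex_le :: "nat \<times> nat \<Rightarrow> nat \<times> nat \<Rightarrow> bool" where
  "lex_le p q \<longleftrightarrow> fst p < fst q \<or> (fst p = fst q \<and> snd p \<le> snd q)"

end

theory Submission
  imports Defs
begin

text \<open>A sequence with \<open>h \<ge> 1\<close> steps ends at an index \<open>s h \<ge> h \<ge> 1\<close>, which differs from \<open>0\<close>;
  as \<open>\<pi>\<close> is injective, its last value \<open>\<pi> (s h)\<close> differs from \<open>\<pi> 0\<close>, so only \<open>dp 0 i\<close> has second
  component \<open>\<pi> 0\<close>. A sequence without drops has \<open>\<pi>\<close>-values increasing from \<open>\<pi> (s 0) = \<pi> 0\<close>,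
  so every pair \<open>(0, p)\<close> in \<open>DP_i\<close> has \<open>p \<ge> \<pi> 0\<close>. Only the injectivity of \<open>\<pi>\<close> matters.\<close>

lemma valid_seq_id: "h \<le> i \<Longrightarrow> valid_seq h i (\<lambda>k. k)"
  unfolding valid_seq_def by auto

lemma valid_seq_index_le:
  assumes "valid_seq h i s" "k \<le> h"
  shows "k \<le> s k"
  using assms(2)
proof (induction k)
  case 0
  then show ?case by simp
next
  case (Suc k)
  then have "s k < s (Suc k)"
    using assms(1) unfolding valid_seq_def by (metis diff_Suc_1 le_add1 plus_1_eq_Suc)
  with Suc show ?case by simp
qed

lemma drops_eq_0_iff: "drops \<pi> h s = 0 \<longleftrightarrow> (\<forall>k\<in>{1..h}. \<pi> (s (k - 1)) \<le> \<pi> (s k))"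
  unfolding drops_def by (auto simp: not_less)

lemma drops_eq_0_imp_first_le:
  assumes "drops \<pi> h s = 0" "k \<le> h"
  shows "\<pi> (s 0) \<le> \<pi> (s k)"
  using assms(2)
proof (induction k)
  case 0
  then show ?case by simp
next
  case (Suc k)
  then have "\<pi> (s k) \<le> \<pi> (s (Suc k))"
    using assms(1) unfolding drops_eq_0_iff by (metis atLeastAtMost_iff diff_Suc_1 le_add1 plus_1_eq_Suc)
  with Suc show ?case by simp
qed

lemma dd_pp_witness:
  assumes "h \<le> i"
  obtains s where "valid_seq h i s" "drops \<pi> h s = dd \<pi> h i" "\<pi> (s h) = pp \<pi> h i"
proof -
  have "\<exists>s. valid_seq h i s \<and> drops \<pi> h s = dd \<pi> h i"
    unfolding dd_def by (rule LeastI_ex) (use valid_seq_id[OF assms] in blast)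
  then obtain s where "valid_seq h i s \<and> drops \<pi> h s = dd \<pi> h i"
    by blast
  then have "\<exists>s'. valid_seq h i s' \<and> drops \<pi> h s' = dd \<pi> h i \<and> \<pi> (s' h) = \<pi> (s h)"
    by blast
  then have "\<exists>s'. valid_seq h i s' \<and> drops \<pi> h s' = dd \<pi> h i \<and> \<pi> (s' h) = pp \<pi> h i"
    unfolding pp_def by (rule LeastI)
  then show ?thesis
    using that by blast
qed

lemma dp_0: "dp \<pi> 0 i = (0, \<pi> 0)"
proof -
  have valid: "valid_seq 0 i s \<longleftrightarrow> s 0 = 0" for s
    unfolding valid_seq_def by auto
  have no_drops: "drops \<pi> 0 s = 0" for s
    unfolding drops_def by simp
  have "dd \<pi> 0 i = 0"
    unfolding dd_def using valid no_drops by (intro Least_equality) auto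
  moreover have "pp \<pi> 0 i = \<pi> 0"
    unfolding pp_def using valid no_drops \<open>dd \<pi> 0 i = 0\<close> by (intro Least_equality) auto
  ultimately show ?thesis
    unfolding dp_def by simp
qed

lemma pp_ge_if_dd_eq_0:
  assumes "h \<le> i" "dd \<pi> h i = 0"
  shows "\<pi> 0 \<le> pp \<pi> h i"
proof -
  obtain s where s: "valid_seq h i s" "drops \<pi> h s = 0" "\<pi> (s h) = pp \<pi> h i"
    using dd_pp_witness[OF assms(1)] assms(2) by metis
  have "\<pi> (s 0) \<le> \<pi> (s h)"
    using drops_eq_0_imp_first_le[OF s(2)] by simp
  with s show ?thesis
    unfolding valid_seq_def by simp
qed

lemma lex_le_dp_0: "h \<le> i \<Longrightarrow> lex_le (dp \<pi> 0 i) (dp \<pi> h i)"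
  using pp_ge_if_dd_eq_0[of h i \<pi>] unfolding lex_le_def dp_0 by (auto simp: dp_def)

lemma pp_neq_if_pos:
  assumes inj: "inj_on \<pi> {0..i}" and "0 < h" "h \<le> i"
  shows "pp \<pi> h i \<noteq> \<pi> 0"
proof -
  obtain s where s: "valid_seq h i s" "\<pi> (s h) = pp \<pi> h i"
    using dd_pp_witness[OF \<open>h \<le> i\<close>] by metis
  have "0 < s h" "s h \<le> i"
    using valid_seq_index_le[OF s(1), of h] \<open>0 < h\<close> s(1) unfolding valid_seq_def by auto
  then have "\<pi> (s h) \<noteq> \<pi> 0"
    using inj_onD[OF inj, of "s h" 0] by auto
  with s(2) show ?thesis by simp
qed

theorem lemma7:
  fixes n :: nat and x :: "nat \<Rightarrow> real" and \<pi> :: "nat \<Rightarrow> nat" and i :: nat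
  assumes mono: "\<And>a b. a \<le> b \<Longrightarrow> b \<le> n + 1 \<Longrightarrow> x a \<le> x b"
    and perm: "bij_betw \<pi> {0..n+1} {0..n+1}"
    and pi_def: "\<And>a b. a < b \<Longrightarrow> b \<le> n + 1 \<Longrightarrow> (\<pi> a > \<pi> b \<longleftrightarrow> key_less x a b)"
    and i: "i \<le> n"
  shows "dp \<pi> 0 i = (0, \<pi> 0)
    \<and> (\<forall>q \<in> DP \<pi> i. lex_le (dp \<pi> 0 i) q)
    \<and> (\<forall>q \<in> DP \<pi> i. snd q = \<pi> 0 \<longrightarrow> q = dp \<pi> 0 i)"
proof -
  have inj: "inj_on \<pi> {0..i}"
    by (rule inj_on_subset[OF bij_betw_imp_inj_on[OF perm]]) (use i in auto)
  have unique: "q = dp \<pi> 0 i" if "q \<in> DP \<pi> i" "snd q = \<pi> 0" for q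
  proof -
    obtain h where h: "h \<le> i" "q = dp \<pi> h i"
      using \<open>q \<in> DP \<pi> i\<close> unfolding DP_def by blast
    have "h = 0"
      using pp_neq_if_pos[OF inj _ h(1)] \<open>snd q = \<pi> 0\<close> h(2) unfolding dp_def by auto
    with h show ?thesis by simp
  qed
  show ?thesis
    using dp_0 lex_le_dp_0 unique unfolding DP_def by blast
qed

end
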